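(* Let $A\in\mathbb{R}^{d\times n}$ (with $n>d$) have nonzero columns $a_1,\dots,a_n$, and let $\tilde A=[A,-A]$ with columns $\tilde a_1,\dots,\tilde a_{2n}$ (so $\tilde a_j=a_j$ and $\tilde a_{n+j}=-a_j$). Let $x_0\in\mathbb{R}^n$ with support $S=\{i:(x_0)_i\neq 0\}$. Let $x_{\mathrm{opt}}\in\mathbb{R}^{|S|}$ be the vector of nonzero entries of $x_0$ and $A_{\mathrm{opt}}$ the matrix of the corresponding columns $a_i$, $i\in S$. Define $\tilde x_0\in\mathbb{R}^{2n}$ by $(\tilde x_0)_i=\max((x_0)_i,0)$ and $(\tilde x_0)_{n+i}=\max(-(x_0)_i,0)$ for $1\le i\le n$, let $\tilde S=\{j:(\tilde x_0)_j>0\}$, and let $\tilde A_{\mathrm{opt}}$ be the matrix of the columns $\tilde a_j$, $j\in\tilde S$. Then for a vector $c\in\mathbb{R}^d$ the following are equivalent: (i) $A_{\mathrm{opt}}$ has full column rank, $A_{\mathrm{opt}}^Tc=\operatorname{sign}(x_{\mathrm{opt}})$, and $|a_j^Tc|<1$ for all $j\notin S$; (ii) $\tilde A_{\mathrm{opt}}$ has full column rank, $\tilde a_j^Tc=1$ for all $j\in\tilde S$, and $\tilde a_j^Tc<1$ for all $j\in\{1,\dots,2n\}\setminus\tilde S$.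
   Context: $\operatorname{sign}$ is applied componentwise. *)

theory Defs
  imports "HOL-Analysis.Analysis"
begin

text \<open>Columns of a matrix are given as an indexed family cols :: nat => real^'d.\<close>
definition full_column_rank :: "(nat \<Rightarrow> real^'d) \<Rightarrow> nat set \<Rightarrow> bool" where
  "full_column_rank cols I \<longleftrightarrow> dim (span (cols ` I)) = card I"

text \<open>Columns of [A, -A] (0-indexed: j < n gives a_j, n <= j < 2n gives -a_(j-n)).\<close>
definition tilde_col :: "nat \<Rightarrow> (nat \<Rightarrow> real^'d) \<Rightarrow> nat \<Rightarrow> real^'d" where
  "tilde_col n a j = (if j < n then a j else - a (j - n))"

definition tilde_x :: "nat \<Rightarrow> (nat \<Rightarrow> real) \<Rightarrow> nat \<Rightarrow> real" where
  "tilde_x n x j = (if j < n then max (x j) 0 else max (- x (j - n)) 0)"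

definition supp :: "nat \<Rightarrow> (nat \<Rightarrow> real) \<Rightarrow> nat set" where
  "supp n x = {i. i < n \<and> x i \<noteq> 0}"

definition tilde_supp :: "nat \<Rightarrow> (nat \<Rightarrow> real) \<Rightarrow> nat set" where
  "tilde_supp n x = {j. j < 2 * n \<and> tilde_x n x j > 0}"

end

theory Submission
  imports Defs
begin

text \<open>Splitting x0 into positive and negative parts selects, for every i in the support of x0,
  exactly one of the two columns a_i and -a_i of [A, -A], namely sgn (x0 i) a_i. Rescaling
  columns by nonzero factors changes neither the column space nor the number of columns, so
  the two rank conditions agree. The dual conditions agree column by column: for each i < n the
  pair of conditions on a_i and -a_i in (ii) says exactly that a_i c = sgn (x0 i) when
  x0 i is nonzero and that -1 < a_i c < 1 otherwise.\<close>

lemma span_image_scaleR_nonzero: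
  fixes v :: "'i \<Rightarrow> 'a::real_vector"
  assumes "\<And>i. i \<in> I \<Longrightarrow> s i \<noteq> 0"
  shows "span ((\<lambda>i. s i *\<^sub>R v i) ` I) = span (v ` I)"
  unfolding span_eq
proof (intro conjI image_subsetI)
  fix i assume "i \<in> I"
  then show "s i *\<^sub>R v i \<in> span (v ` I)"
    by (simp add: span_base span_mul)
  have "s i \<noteq> 0"
    using assms \<open>i \<in> I\<close> .
  then have "v i = inverse (s i) *\<^sub>R (s i *\<^sub>R v i)"
    by simp
  also have "\<dots> \<in> span ((\<lambda>i. s i *\<^sub>R v i) ` I)"
    using \<open>i \<in> I\<close> by (intro span_mul span_base imageI)
  finally show "v i \<in> span ((\<lambda>i. s i *\<^sub>R v i) ` I)" .
qed

lemma all_less_double_iff: "(\<forall>j < 2 * (n::nat). P j) \<longleftrightarrow> (\<forall>i < n. P i \<and> P (n + i))"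
proof safe
  fix j assume "\<forall>i < n. P i \<and> P (n + i)" "j < 2 * n"
  then show "P j"
    by (cases "j < n") (auto dest: spec[of _ "j - n"])
qed auto

lemma mem_tilde_supp_iff:
  "j \<in> tilde_supp n x \<longleftrightarrow> j < n \<and> x j > 0 \<or> n \<le> j \<and> j < 2 * n \<and> x (j - n) < 0"
  unfolding tilde_supp_def tilde_x_def by auto

definition tilde_index :: "nat \<Rightarrow> (nat \<Rightarrow> real) \<Rightarrow> nat \<Rightarrow> nat" where
  "tilde_index n x i = (if x i > 0 then i else n + i)"

lemma bij_betw_tilde_index: "bij_betw (tilde_index n x) (supp n x) (tilde_supp n x)"
  by (rule bij_betw_byWitness[where f' = "\<lambda>j. if j < n then j else j - n"])
     (auto simp: tilde_index_def supp_def mem_tilde_supp_iff)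

lemma tilde_col_tilde_index:
  assumes "i \<in> supp n x"
  shows "tilde_col n a (tilde_index n x i) = sgn (x i) *\<^sub>R a i"
  using assms by (auto simp: tilde_index_def tilde_col_def supp_def sgn_if)

lemma full_column_rank_tilde_iff:
  "full_column_rank (tilde_col n a) (tilde_supp n x) \<longleftrightarrow> full_column_rank a (supp n x)"
proof -
  have "tilde_col n a ` tilde_supp n x = tilde_col n a ` tilde_index n x ` supp n x"
    using bij_betw_tilde_index[of n x] by (simp add: bij_betw_def)
  also have "\<dots> = (\<lambda>i. sgn (x i) *\<^sub>R a i) ` supp n x"
    unfolding image_image by (rule image_cong) (simp_all add: tilde_col_tilde_index)
  finally have cols: "tilde_col n a ` tilde_supp n x = (\<lambda>i. sgn (x i) *\<^sub>R a i) ` supp n x" .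
  have "span (tilde_col n a ` tilde_supp n x) = span (a ` supp n x)"
    unfolding cols by (rule span_image_scaleR_nonzero) (simp add: supp_def sgn_if)
  moreover have "card (tilde_supp n x) = card (supp n x)"
    using bij_betw_same_card[OF bij_betw_tilde_index] by simp
  ultimately show ?thesis
    by (simp add: full_column_rank_def)
qed

lemma sign_condition_split:
  fixes t x :: real
  shows "(if x \<noteq> 0 then t = sgn x else \<bar>t\<bar> < 1) \<longleftrightarrow>
         (if x > 0 then t = 1 else t < 1) \<and> (if x < 0 then - t = 1 else - t < 1)"
  by (auto simp: sgn_if)

lemma dual_conditions_tilde_iff:
  "((\<forall>i\<in>supp n x. a i \<bullet> c = sgn (x i)) \<and> (\<forall>j<n. j \<notin> supp n x \<longrightarrow> \<bar>a j \<bullet> c\<bar> < 1))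
   \<longleftrightarrow> ((\<forall>j\<in>tilde_supp n x. tilde_col n a j \<bullet> c = 1)
        \<and> (\<forall>j<2 * n. j \<notin> tilde_supp n x \<longrightarrow> tilde_col n a j \<bullet> c < 1))"
proof -
  have "((\<forall>i\<in>supp n x. a i \<bullet> c = sgn (x i)) \<and> (\<forall>j<n. j \<notin> supp n x \<longrightarrow> \<bar>a j \<bullet> c\<bar> < 1))
        \<longleftrightarrow> (\<forall>i<n. if x i \<noteq> 0 then a i \<bullet> c = sgn (x i) else \<bar>a i \<bullet> c\<bar> < 1)"
    by (auto simp: supp_def)
  also have "\<dots> \<longleftrightarrow> (\<forall>j<2 * n. if j \<in> tilde_supp n x then tilde_col n a j \<bullet> c = 1
                                 else tilde_col n a j \<bullet> c < 1)"
    unfolding all_less_double_iff sign_condition_split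
    by (simp add: mem_tilde_supp_iff tilde_col_def)
  also have "\<dots> \<longleftrightarrow> (\<forall>j\<in>tilde_supp n x. tilde_col n a j \<bullet> c = 1)
                    \<and> (\<forall>j<2 * n. j \<notin> tilde_supp n x \<longrightarrow> tilde_col n a j \<bullet> c < 1)"
    by (auto simp: tilde_supp_def)
  finally show ?thesis .
qed

theorem lemma2:
  fixes n :: nat and a :: "nat \<Rightarrow> real^'d" and x0 :: "nat \<Rightarrow> real" and c :: "real^'d"
  assumes "n > CARD('d)"
    and "\<forall>i<n. a i \<noteq> 0"
  shows "(full_column_rank a (supp n x0)
          \<and> (\<forall>i\<in>supp n x0. a i \<bullet> c = sgn (x0 i))
          \<and> (\<forall>j<n. j \<notin> supp n x0 \<longrightarrow> \<bar>a j \<bullet> c\<bar> < 1))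
     \<longleftrightarrow>
         (full_column_rank (tilde_col n a) (tilde_supp n x0)
          \<and> (\<forall>j\<in>tilde_supp n x0. tilde_col n a j \<bullet> c = 1)
          \<and> (\<forall>j<2 * n. j \<notin> tilde_supp n x0 \<longrightarrow> tilde_col n a j \<bullet> c < 1))"
  using full_column_rank_tilde_iff[of n a x0] dual_conditions_tilde_iff[of n x0 a c]
  by blast

end
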